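(* Let $\oplus$ be a combinator whose domain is the set of all pairs of tpos over $W$. Then $\oplus$ is a TeamQueue combinator if and only if $\oplus$ is basic and satisfies, for all pairs $\langle\preceq_1,\preceq_2\rangle$ and all $x,y,z \in W$: ($\oplus$SPU+) if $x \prec_1 y$ and $z \prec_2 y$ then $x \prec_{1\oplus 2} y$ or $z \prec_{1\oplus 2} y$; ($\oplus$WPU+) if $x \preceq_1 y$ and $z \preceq_2 y$ then $x \preceq_{1\oplus 2} y$ or $z \preceq_{1\oplus 2} y$; ($\oplus$NO) for $i \neq j$ in $\{1,2\}$, if $x \prec_i y$ and $z \preceq_j y$ then $x \prec_{1\oplus 2} y$ or $z \preceq_{1\oplus 2} y$.
   Context: $W$ is a finite nonempty set (of possible worlds). A tpo is a total preorder on $W$; $\prec$ and $\sim$ denote strict and symmetric parts. For $S \subseteq W$, $\min(\preceq, S) = \{x \in S : x \preceq y \text{ for all } y \in S\}$. A combinator $\oplus$ maps pairs of tpos $\langle\preceq_1,\preceq_2\rangle$ in its domain to a tpo $\preceq_{1\oplus 2}$. It is basic if $\min(\preceq_{1\oplus 2}, W) = \min(\preceq_1, W) \cup \min(\preceq_2, W)$ for every pair in its domain. $\oplus$ is a TeamQueue combinator if for each pair $\langle\preceq_1,\preceq_2\rangle$ in its domain there is a sequence $\langle a(i)\rangle_{i \in \mathbb{N}}$ (depending on the pair) with $\emptyset \neq a(i) \subseteq \{1,2\}$ for all $i$ and $a(1) = \{1,2\}$, such that $\preceq_{1\oplus 2}$ is the tpo whose ordered partition into ranks (lowest = most plausible first)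 is $\langle T_1, \ldots, T_m\rangle$, where inductively $T_i = \bigcup_{j \in a(i)} \min(\preceq_j, \bigcap_{k<i} T_k^c)$ ($T^c$ the complement of $T$ in $W$) and $m$ is minimal with $\bigcup_{i \le m} T_i = W$; i.e. $x \preceq_{1\oplus 2} y$ iff the index of the cell containing $x$ is at most that of the cell containing $y$. *)

theory Defs
  imports Main
begin

text \<open>W is modelled as a finite type 'w (finite, and nonempty as every type).
  A tpo is a binary relation 'w \<Rightarrow> 'w \<Rightarrow> bool (r x y read as x \<preceq> y).\<close>

definition tpo :: "('w \<Rightarrow> 'w \<Rightarrow> bool) \<Rightarrow> bool" where
  "tpo r \<longleftrightarrow> (\<forall>x. r x x) \<and> (\<forall>x y z. r x y \<longrightarrow> r y z \<longrightarrow> r x z) \<and> (\<forall>x y. r x y \<or> r y x)"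

definition strict :: "('w \<Rightarrow> 'w \<Rightarrow> bool) \<Rightarrow> 'w \<Rightarrow> 'w \<Rightarrow> bool" where
  "strict r x y \<longleftrightarrow> r x y \<and> \<not> r y x"

definition minset :: "('w \<Rightarrow> 'w \<Rightarrow> bool) \<Rightarrow> 'w set \<Rightarrow> 'w set" where
  "minset r S = {x \<in> S. \<forall>y \<in> S. r x y}"

definition is_combinator :: "(('w \<Rightarrow> 'w \<Rightarrow> bool) \<Rightarrow> ('w \<Rightarrow> 'w \<Rightarrow> bool) \<Rightarrow> ('w \<Rightarrow> 'w \<Rightarrow> bool)) \<Rightarrow> bool" where
  "is_combinator c \<longleftrightarrow> (\<forall>r1 r2. tpo r1 \<longrightarrow> tpo r2 \<longrightarrow> tpo (c r1 r2))"

definition basic :: "(('w \<Rightarrow> 'w \<Rightarrow> bool) \<Rightarrow> ('w \<Rightarrow> 'w \<Rightarrow> bool) \<Rightarrow> ('w \<Rightarrow> 'w \<Rightarrow> bool)) \<Rightarrow> bool" where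
  "basic c \<longleftrightarrow> (\<forall>r1 r2. tpo r1 \<longrightarrow> tpo r2 \<longrightarrow>
      minset (c r1 r2) UNIV = minset r1 UNIV \<union> minset r2 UNIV)"

definition sel :: "('w \<Rightarrow> 'w \<Rightarrow> bool) \<Rightarrow> ('w \<Rightarrow> 'w \<Rightarrow> bool) \<Rightarrow> nat \<Rightarrow> ('w \<Rightarrow> 'w \<Rightarrow> bool)" where
  "sel r1 r2 j = (if j = 1 then r1 else r2)"

text \<open>tq_rest r1 r2 a n = complement of T_1 \<union> ... \<union> T_n;  tq_cell r1 r2 a i = T_i (i \<ge> 1).\<close>
primrec tq_rest :: "('w \<Rightarrow> 'w \<Rightarrow> bool) \<Rightarrow> ('w \<Rightarrow> 'w \<Rightarrow> bool) \<Rightarrow> (nat \<Rightarrow> nat set) \<Rightarrow> nat \<Rightarrow> 'w set" where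
  "tq_rest r1 r2 a 0 = UNIV"
| "tq_rest r1 r2 a (Suc n) =
     tq_rest r1 r2 a n - (\<Union>j \<in> a (Suc n). minset (sel r1 r2 j) (tq_rest r1 r2 a n))"

definition tq_cell :: "('w \<Rightarrow> 'w \<Rightarrow> bool) \<Rightarrow> ('w \<Rightarrow> 'w \<Rightarrow> bool) \<Rightarrow> (nat \<Rightarrow> nat set) \<Rightarrow> nat \<Rightarrow> 'w set" where
  "tq_cell r1 r2 a i = (\<Union>j \<in> a i. minset (sel r1 r2 j) (tq_rest r1 r2 a (i - 1)))"

definition tq_rank :: "('w \<Rightarrow> 'w \<Rightarrow> bool) \<Rightarrow> ('w \<Rightarrow> 'w \<Rightarrow> bool) \<Rightarrow> (nat \<Rightarrow> nat set) \<Rightarrow> 'w \<Rightarrow> nat" where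
  "tq_rank r1 r2 a x = (LEAST i. 1 \<le> i \<and> x \<in> tq_cell r1 r2 a i)"

definition teamqueue :: "(('w \<Rightarrow> 'w \<Rightarrow> bool) \<Rightarrow> ('w \<Rightarrow> 'w \<Rightarrow> bool) \<Rightarrow> ('w \<Rightarrow> 'w \<Rightarrow> bool)) \<Rightarrow> bool" where
  "teamqueue c \<longleftrightarrow> (\<forall>r1 r2. tpo r1 \<longrightarrow> tpo r2 \<longrightarrow>
     (\<exists>a :: nat \<Rightarrow> nat set.
        (\<forall>i \<ge> 1. a i \<noteq> {} \<and> a i \<subseteq> {1, 2}) \<and> a 1 = {1, 2} \<and>
        (\<exists>m. (\<Union>i \<in> {1..m}. tq_cell r1 r2 a i) = UNIV) \<and>
        (\<forall>x y. c r1 r2 x y \<longleftrightarrow> tq_rank r1 r2 a x \<le> tq_rank r1 r2 a y)))"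

end

theory Submission
  imports Defs
begin

text \<open>If \<open>\<oplus>\<close> is a TeamQueue combinator, every world \<open>y\<close> enters the queue as a minimum of
  some input \<open>\<preceq>\<^sub>j\<close> among the remaining worlds, so everything \<open>\<preceq>\<^sub>j\<close>-below \<open>y\<close> is
  \<open>\<preceq>\<^sub>1\<^sub>\<oplus>\<^sub>2\<close>-below it, strictly if strictly; this gives all three postulates at once.
  Conversely, the postulates force the \<open>\<preceq>\<^sub>1\<^sub>\<oplus>\<^sub>2\<close>-minimum of any set of worlds to be the
  union of the two input minima or one of them; peeling off the ranks of \<open>\<preceq>\<^sub>1\<^sub>\<oplus>\<^sub>2\<close> one at a
  time and recording which case occurs yields the sequence \<open>a\<close>, and basicness gives \<open>a(1) = {1,2}\<close>.\<close>

definition tq_represents ::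
    "('w \<Rightarrow> 'w \<Rightarrow> bool) \<Rightarrow> ('w \<Rightarrow> 'w \<Rightarrow> bool) \<Rightarrow> (nat \<Rightarrow> nat set) \<Rightarrow> ('w \<Rightarrow> 'w \<Rightarrow> bool) \<Rightarrow> bool"
  where "tq_represents r1 r2 a cc \<longleftrightarrow>
    (\<forall>i \<ge> 1. a i \<noteq> {} \<and> a i \<subseteq> {1, 2}) \<and> a 1 = {1, 2} \<and>
    (\<exists>m. (\<Union>i \<in> {1..m}. tq_cell r1 r2 a i) = UNIV) \<and>
    (\<forall>x y. cc x y \<longleftrightarrow> tq_rank r1 r2 a x \<le> tq_rank r1 r2 a y)"

definition tq_postulates :: "('w \<Rightarrow> 'w \<Rightarrow> bool) \<Rightarrow> ('w \<Rightarrow> 'w \<Rightarrow> bool) \<Rightarrow> ('w \<Rightarrow> 'w \<Rightarrow> bool) \<Rightarrow> bool"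
  where "tq_postulates r1 r2 cc \<longleftrightarrow> (\<forall>x y z.
    (strict r1 x y \<and> strict r2 z y \<longrightarrow> strict cc x y \<or> strict cc z y) \<and>
    (r1 x y \<and> r2 z y \<longrightarrow> cc x y \<or> cc z y) \<and>
    (strict r1 x y \<and> r2 z y \<longrightarrow> strict cc x y \<or> cc z y) \<and>
    (strict r2 x y \<and> r1 z y \<longrightarrow> strict cc x y \<or> cc z y))"

lemma teamqueue_iff_tq_represents:
  "teamqueue c \<longleftrightarrow> (\<forall>r1 r2. tpo r1 \<longrightarrow> tpo r2 \<longrightarrow> (\<exists>a. tq_represents r1 r2 a (c r1 r2)))"
  by (simp add: teamqueue_def tq_represents_def)

lemma minset_subset: "minset r S \<subseteq> S"
  by (auto simp: minset_def)

lemma minset_nonempty: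
  assumes "tpo r" "finite S" "S \<noteq> {}"
  shows "minset r S \<noteq> {}"
  using assms(2,3)
proof (induction S rule: finite_ne_induct)
  case (singleton x)
  then show ?case using assms(1) by (auto simp: minset_def tpo_def)
next
  case (insert x F)
  then obtain m where m: "m \<in> minset r F" by blast
  show ?case
  proof (cases "r m x")
    case True
    then have "m \<in> minset r (insert x F)" using m by (auto simp: minset_def)
    then show ?thesis by blast
  next
    case False
    then have "x \<in> minset r (insert x F)" using m assms(1) unfolding minset_def tpo_def by blast
    then show ?thesis by blast
  qed
qed

lemma minset_if_le_minset:
  assumes "tpo r" "y \<in> minset r S" "w \<in> S" "r w y"
  shows "w \<in> minset r S"
  using assms unfolding minset_def tpo_def by blast

lemma strict_if_notin_minset:
  assumes "tpo r" "z \<in> minset r S" "y \<in> S" "y \<notin> minset r S"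
  shows "strict r z y"
  using assms unfolding minset_def strict_def tpo_def by blast

lemma tq_rest_eq_Compl_cells: "tq_rest r1 r2 a k = - (\<Union>i \<in> {1..k}. tq_cell r1 r2 a i)"
proof (induction k)
  case (Suc n)
  have "{1..Suc n} = insert (Suc n) {1..n}" by auto
  then show ?case using Suc by (auto simp: tq_cell_def)
qed simp

lemma tq_rest_antimono: "k \<le> l \<Longrightarrow> tq_rest r1 r2 a l \<subseteq> tq_rest r1 r2 a k"
  unfolding tq_rest_eq_Compl_cells by auto

lemma tq_cell_subset_rest: "tq_cell r1 r2 a i \<subseteq> tq_rest r1 r2 a (i - 1)"
  by (auto simp: tq_cell_def minset_def)

lemma tq_rank_eqI:
  assumes "1 \<le> i" "x \<in> tq_cell r1 r2 a i"
  shows "tq_rank r1 r2 a x = i"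
  unfolding tq_rank_def
proof (rule Least_equality)
  fix j assume j: "1 \<le> j \<and> x \<in> tq_cell r1 r2 a j"
  have "x \<in> tq_rest r1 r2 a (i - 1)" using tq_cell_subset_rest[of r1 r2 a i] assms(2) by blast
  then show "i \<le> j" using j unfolding tq_rest_eq_Compl_cells by force
qed (use assms in simp)

lemma tq_rank_le_if_notin_rest: "x \<notin> tq_rest r1 r2 a k \<Longrightarrow> tq_rank r1 r2 a x \<le> k"
  unfolding tq_rest_eq_Compl_cells using tq_rank_eqI by fastforce

lemma in_tq_cell_tq_rank:
  assumes "(\<Union>i \<in> {1..m}. tq_cell r1 r2 a i) = UNIV"
  shows "x \<in> tq_cell r1 r2 a (tq_rank r1 r2 a x) \<and> 1 \<le> tq_rank r1 r2 a x"
proof -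
  obtain i where "i \<in> {1..m}" "x \<in> tq_cell r1 r2 a i" using assms by blast
  then show ?thesis using tq_rank_eqI[of i x] by auto
qed

lemma tq_rank_le_if_le_minset:
  assumes "tpo (sel r1 r2 j)" "j \<in> a n" "1 \<le> n"
    and "y \<in> minset (sel r1 r2 j) (tq_rest r1 r2 a (n - 1))" "sel r1 r2 j w y"
  shows "tq_rank r1 r2 a w \<le> n"
proof (cases "w \<in> tq_rest r1 r2 a (n - 1)")
  case True
  then have "w \<in> tq_cell r1 r2 a n"
    using minset_if_le_minset[OF assms(1,4) True assms(5)] assms(2) by (auto simp: tq_cell_def)
  then show ?thesis using tq_rank_eqI assms(3) by fastforce
next
  case False
  then show ?thesis using tq_rank_le_if_notin_rest by fastforce
qed

lemma tq_rank_less_if_less_minset: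
  assumes "1 \<le> n" "y \<in> minset r (tq_rest r1 r2 a (n - 1))" "strict r w y"
  shows "tq_rank r1 r2 a w < n"
proof -
  have "w \<notin> tq_rest r1 r2 a (n - 1)" using assms(2,3) by (auto simp: minset_def strict_def)
  then have "tq_rank r1 r2 a w \<le> n - 1" by (rule tq_rank_le_if_notin_rest)
  then show ?thesis using assms(1) by linarith
qed

lemma tq_rank_le_iff:
  assumes cc: "tpo cc"
    and cov: "(\<Union>i \<in> {1..m}. tq_cell r1 r2 a i) = UNIV"
    and cells: "\<And>i. 1 \<le> i \<Longrightarrow> tq_cell r1 r2 a i = minset cc (tq_rest r1 r2 a (i - 1))"
  shows "cc x y \<longleftrightarrow> tq_rank r1 r2 a x \<le> tq_rank r1 r2 a y"
proof -
  let ?rest = "tq_rest r1 r2 a" and ?rk = "tq_rank r1 r2 a"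
  have x: "x \<in> minset cc (?rest (?rk x - 1))" "1 \<le> ?rk x"
    and y: "y \<in> minset cc (?rest (?rk y - 1))" "1 \<le> ?rk y"
    using in_tq_cell_tq_rank[OF cov] cells by auto
  show ?thesis
  proof
    assume cxy: "cc x y"
    show "?rk x \<le> ?rk y"
    proof (rule ccontr)
      assume lt: "\<not> ?rk x \<le> ?rk y"
      then have "x \<in> ?rest (?rk y - 1)"
        using x(1) minset_subset tq_rest_antimono[of "?rk y - 1" "?rk x - 1"] by fastforce
      then have "x \<in> tq_cell r1 r2 a (?rk y)"
        using minset_if_le_minset[OF cc y(1) _ cxy] cells[OF y(2)] by simp
      then have "?rk x = ?rk y" by (rule tq_rank_eqI[OF y(2)])
      then show False using lt by simp
    qed
  next
    assume "?rk x \<le> ?rk y"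
    then have "y \<in> ?rest (?rk x - 1)"
      using y(1) minset_subset tq_rest_antimono[of "?rk x - 1" "?rk y - 1"] by fastforce
    then show "cc x y" using x(1) by (auto simp: minset_def)
  qed
qed

lemma tq_postulatesI:
  assumes "\<And>y. \<exists>r \<in> {r1, r2}. (\<forall>w. r w y \<longrightarrow> cc w y) \<and> (\<forall>w. strict r w y \<longrightarrow> strict cc w y)"
  shows "tq_postulates r1 r2 cc"
  unfolding tq_postulates_def
proof (intro allI)
  fix x y z
  from assms[of y] show "(strict r1 x y \<and> strict r2 z y \<longrightarrow> strict cc x y \<or> strict cc z y) \<and>
    (r1 x y \<and> r2 z y \<longrightarrow> cc x y \<or> cc z y) \<and>
    (strict r1 x y \<and> r2 z y \<longrightarrow> strict cc x y \<or> cc z y) \<and>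
    (strict r2 x y \<and> r1 z y \<longrightarrow> strict cc x y \<or> cc z y)"
    by blast
qed

lemma tq_represents_below_dominated:
  assumes "tpo r1" "tpo r2" "tq_represents r1 r2 a cc"
  shows "\<exists>r \<in> {r1, r2}. (\<forall>w. r w y \<longrightarrow> cc w y) \<and> (\<forall>w. strict r w y \<longrightarrow> strict cc w y)"
proof -
  let ?rk = "tq_rank r1 r2 a"
  obtain m where cov: "(\<Union>i \<in> {1..m}. tq_cell r1 r2 a i) = UNIV"
    using assms(3) by (auto simp: tq_represents_def)
  have ccI: "cc u v \<longleftrightarrow> ?rk u \<le> ?rk v" for u v using assms(3) by (simp add: tq_represents_def)
  then have strictI: "strict cc u v \<longleftrightarrow> ?rk u < ?rk v" for u v by (auto simp: strict_def)
  obtain j where j: "j \<in> a (?rk y)" "1 \<le> ?rk y"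
      "y \<in> minset (sel r1 r2 j) (tq_rest r1 r2 a (?rk y - 1))"
    using in_tq_cell_tq_rank[OF cov, of y] by (auto simp: tq_cell_def)
  have sel: "sel r1 r2 j \<in> {r1, r2}" and "tpo (sel r1 r2 j)"
    using assms(1,2) by (auto simp: sel_def)
  have "\<forall>w. sel r1 r2 j w y \<longrightarrow> cc w y"
    using tq_rank_le_if_le_minset[OF \<open>tpo (sel r1 r2 j)\<close> j] ccI by blast
  moreover have "\<forall>w. strict (sel r1 r2 j) w y \<longrightarrow> strict cc w y"
    using tq_rank_less_if_less_minset[OF j(2,3)] strictI by blast
  ultimately show ?thesis using sel by blast
qed

lemma tq_represents_minset_UNIV:
  fixes r1 r2 cc :: "'w::finite \<Rightarrow> 'w \<Rightarrow> bool"
  assumes "tpo r1" "tq_represents r1 r2 a cc"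
  shows "minset cc UNIV = minset r1 UNIV \<union> minset r2 UNIV"
proof -
  let ?rk = "tq_rank r1 r2 a"
  obtain m where cov: "(\<Union>i \<in> {1..m}. tq_cell r1 r2 a i) = UNIV"
    using assms(2) by (auto simp: tq_represents_def)
  have ccI: "cc x y \<longleftrightarrow> ?rk x \<le> ?rk y" for x y using assms(2) by (simp add: tq_represents_def)
  have cell1: "tq_cell r1 r2 a 1 = minset r1 UNIV \<union> minset r2 UNIV"
    using assms(2) by (simp add: tq_represents_def tq_cell_def sel_def)
  have rank1: "?rk x = 1 \<longleftrightarrow> x \<in> minset r1 UNIV \<union> minset r2 UNIV" for x
    using tq_rank_eqI[of 1 x] in_tq_cell_tq_rank[OF cov, of x] cell1 by auto
  obtain y where "y \<in> minset r1 UNIV" using minset_nonempty[OF assms(1) finite UNIV_not_empty] by blast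
  then have "?rk y = 1" using rank1 by blast
  have ge1: "1 \<le> ?rk z" for z using in_tq_cell_tq_rank[OF cov, of z] by blast
  have "x \<in> minset cc UNIV \<longleftrightarrow> ?rk x = 1" for x
  proof
    assume "x \<in> minset cc UNIV"
    then have "?rk x \<le> ?rk y" by (simp add: minset_def ccI)
    then show "?rk x = 1" using ge1[of x] \<open>?rk y = 1\<close> by simp
  next
    assume "?rk x = 1"
    then show "x \<in> minset cc UNIV" using ge1 by (simp add: minset_def ccI)
  qed
  then show ?thesis using rank1 by blast
qed

subsection \<open>The postulates determine the minimum of every set\<close>

lemma minset_subset_union_if_SPU:
  fixes r1 r2 cc :: "'w::finite \<Rightarrow> 'w \<Rightarrow> bool"
  assumes tpos: "tpo r1" "tpo r2" and nonempty: "D \<noteq> {}"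
    and spu: "\<And>x y z. strict r1 x y \<Longrightarrow> strict r2 z y \<Longrightarrow> strict cc x y \<or> strict cc z y"
  shows "minset cc D \<subseteq> minset r1 D \<union> minset r2 D"
proof
  fix y assume y: "y \<in> minset cc D"
  show "y \<in> minset r1 D \<union> minset r2 D"
  proof (rule ccontr)
    assume n: "y \<notin> minset r1 D \<union> minset r2 D"
    obtain x where x: "x \<in> minset r1 D" using minset_nonempty[OF tpos(1) finite nonempty] by blast
    obtain z where z: "z \<in> minset r2 D" using minset_nonempty[OF tpos(2) finite nonempty] by blast
    have yD: "y \<in> D" using y by (simp add: minset_def)
    have "strict r1 x y" using strict_if_notin_minset[OF tpos(1) x yD] n by blast
    moreover have "strict r2 z y" using strict_if_notin_minset[OF tpos(2) z yD] n by blast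
    ultimately have "strict cc x y \<or> strict cc z y" by (rule spu)
    moreover have "cc y x" "cc y z" using x z y by (auto simp: minset_def)
    ultimately show False by (auto simp: strict_def)
  qed
qed

lemma minset_subset_minset_if_WPU:
  fixes r1 r2 cc :: "'w::finite \<Rightarrow> 'w \<Rightarrow> bool"
  assumes tpo: "tpo cc" and nonempty: "D \<noteq> {}"
    and wpu: "\<And>x y z. r1 x y \<Longrightarrow> r2 z y \<Longrightarrow> cc x y \<or> cc z y"
  shows "minset r1 D \<subseteq> minset cc D \<or> minset r2 D \<subseteq> minset cc D"
proof (rule ccontr)
  assume "\<not> ?thesis"
  then obtain w1 w2 where w: "w1 \<in> minset r1 D" "w1 \<notin> minset cc D"
    "w2 \<in> minset r2 D" "w2 \<notin> minset cc D" by blast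
  obtain y where y: "y \<in> minset cc D" using minset_nonempty[OF tpo finite nonempty] by blast
  have "r1 w1 y" "r2 w2 y" using w y by (auto simp: minset_def)
  then have "cc w1 y \<or> cc w2 y" by (rule wpu)
  moreover have "w1 \<in> D" "w2 \<in> D" using w by (simp_all add: minset_def)
  ultimately show False using minset_if_le_minset[OF tpo y] w by blast
qed

lemma minset_subset_if_NO:
  fixes r r' cc :: "'w::finite \<Rightarrow> 'w \<Rightarrow> bool"
  assumes tpos: "tpo r'" "tpo cc"
    and no: "\<And>x y z. strict r' x y \<Longrightarrow> r z y \<Longrightarrow> strict cc x y \<or> cc z y"
    and sub: "minset cc D \<subseteq> minset r D \<union> minset r' D"
    and escapes: "\<not> minset cc D \<subseteq> minset r' D"
  shows "minset r D \<subseteq> minset cc D"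
proof
  fix w assume w: "w \<in> minset r D"
  obtain y where y: "y \<in> minset cc D" "y \<notin> minset r' D" using escapes by blast
  have yD: "y \<in> D" using y(1) by (simp add: minset_def)
  obtain z where z: "z \<in> minset r' D" using minset_nonempty[OF tpos(1) finite, of D] yD by blast
  have "r w y" using w y sub by (auto simp: minset_def)
  with strict_if_notin_minset[OF tpos(1) z yD y(2)] have "strict cc z y \<or> cc w y" by (rule no)
  moreover have "cc y z" using y(1) z by (auto simp: minset_def)
  ultimately have "cc w y" by (auto simp: strict_def)
  moreover have "w \<in> D" using w by (simp add: minset_def)
  ultimately show "w \<in> minset cc D" by (rule minset_if_le_minset[OF tpos(2) y(1), rotated])
qed

lemma minset_cases_if_tq_postulates:
  fixes r1 r2 cc :: "'w::finite \<Rightarrow> 'w \<Rightarrow> bool"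
  assumes tpos: "tpo r1" "tpo r2" "tpo cc" and post: "tq_postulates r1 r2 cc"
  shows "minset cc D = minset r1 D \<union> minset r2 D \<or> minset cc D = minset r1 D \<or>
    minset cc D = minset r2 D"
proof (cases "D = {}")
  case False
  have spu: "\<And>x y z. strict r1 x y \<Longrightarrow> strict r2 z y \<Longrightarrow> strict cc x y \<or> strict cc z y"
    and wpu: "\<And>x y z. r1 x y \<Longrightarrow> r2 z y \<Longrightarrow> cc x y \<or> cc z y"
    and no1: "\<And>x y z. strict r1 x y \<Longrightarrow> r2 z y \<Longrightarrow> strict cc x y \<or> cc z y"
    and no2: "\<And>x y z. strict r2 x y \<Longrightarrow> r1 z y \<Longrightarrow> strict cc x y \<or> cc z y"
    using post by (auto simp: tq_postulates_def)
  note sub = minset_subset_union_if_SPU[OF tpos(1,2) False spu]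
  have "minset r1 D \<subseteq> minset cc D" if "\<not> minset cc D \<subseteq> minset r2 D"
    using minset_subset_if_NO[OF tpos(2,3) no2 sub that] .
  moreover have "minset r2 D \<subseteq> minset cc D" if "\<not> minset cc D \<subseteq> minset r1 D"
  proof -
    have "minset cc D \<subseteq> minset r2 D \<union> minset r1 D" using sub by blast
    then show ?thesis using minset_subset_if_NO[OF tpos(1,3) no1 _ that] by blast
  qed
  ultimately show ?thesis using sub minset_subset_minset_if_WPU[OF tpos(3) False wpu] by blast
qed (simp add: minset_def)

definition layer_rest :: "('w \<Rightarrow> 'w \<Rightarrow> bool) \<Rightarrow> nat \<Rightarrow> 'w set" where
  "layer_rest cc k = ((\<lambda>D. D - minset cc D) ^^ k) UNIV"

lemma layer_rest_0 [simp]: "layer_rest cc 0 = UNIV"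
  by (simp add: layer_rest_def)

lemma layer_rest_Suc [simp]: "layer_rest cc (Suc k) = layer_rest cc k - minset cc (layer_rest cc k)"
  by (simp add: layer_rest_def)

lemma card_layer_rest:
  fixes cc :: "'w::finite \<Rightarrow> 'w \<Rightarrow> bool"
  assumes "tpo cc" "layer_rest cc k \<noteq> {}"
  shows "card (layer_rest cc k) + k \<le> card (UNIV :: 'w set)"
  using assms(2)
proof (induction k)
  case 0
  then show ?case by (simp add: card_mono)
next
  case (Suc k)
  have ne: "layer_rest cc k \<noteq> {}" using Suc.prems by auto
  then obtain y where "y \<in> minset cc (layer_rest cc k)"
    using minset_nonempty[OF assms(1) finite] by blast
  then have "layer_rest cc (Suc k) \<subset> layer_rest cc k" by (auto simp: minset_def)
  then have "card (layer_rest cc (Suc k)) < card (layer_rest cc k)" by (simp add: psubset_card_mono)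
  then show ?case using Suc.IH ne by simp
qed

lemma layer_rest_card_UNIV:
  fixes cc :: "'w::finite \<Rightarrow> 'w \<Rightarrow> bool"
  assumes "tpo cc"
  shows "layer_rest cc (card (UNIV :: 'w set)) = {}"
  using card_layer_rest[OF assms] by (fastforce simp: card_gt_0_iff)

definition tq_choice ::
    "('w \<Rightarrow> 'w \<Rightarrow> bool) \<Rightarrow> ('w \<Rightarrow> 'w \<Rightarrow> bool) \<Rightarrow> ('w \<Rightarrow> 'w \<Rightarrow> bool) \<Rightarrow> 'w set \<Rightarrow> nat set" where
  "tq_choice r1 r2 cc D = (if minset cc D = minset r1 D \<union> minset r2 D then {1, 2}
      else if minset cc D = minset r1 D then {1} else {2})"

lemma tq_postulates_imp_tq_represents:
  fixes r1 r2 cc :: "'w::finite \<Rightarrow> 'w \<Rightarrow> bool"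
  assumes tpos: "tpo r1" "tpo r2" "tpo cc"
    and bas: "minset cc UNIV = minset r1 UNIV \<union> minset r2 UNIV"
    and post: "tq_postulates r1 r2 cc"
  shows "\<exists>a. tq_represents r1 r2 a cc"
proof
  define a where "a i = tq_choice r1 r2 cc (layer_rest cc (i - 1))" for i
  have choice: "(\<Union>j \<in> tq_choice r1 r2 cc D. minset (sel r1 r2 j) D) = minset cc D" for D
    using minset_cases_if_tq_postulates[OF tpos post, of D]
    by (auto simp: tq_choice_def sel_def)
  have rest: "tq_rest r1 r2 a k = layer_rest cc k" for k
    by (induction k) (simp_all add: a_def choice)
  have cells: "tq_cell r1 r2 a i = minset cc (tq_rest r1 r2 a (i - 1))" for i
    by (simp add: tq_cell_def rest a_def choice)
  have cov: "(\<Union>i \<in> {1..card (UNIV :: 'w set)}. tq_cell r1 r2 a i) = UNIV"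
    using tq_rest_eq_Compl_cells[of r1 r2 a "card (UNIV :: 'w set)"] rest layer_rest_card_UNIV[OF tpos(3)]
    by auto
  show "tq_represents r1 r2 a cc"
    unfolding tq_represents_def
    using tq_rank_le_iff[OF tpos(3) cov cells] cov bas
    by (auto simp: a_def tq_choice_def)
qed

lemma tq_represents_iff_tq_postulates:
  fixes r1 r2 cc :: "'w::finite \<Rightarrow> 'w \<Rightarrow> bool"
  assumes "tpo r1" "tpo r2" "tpo cc"
  shows "(\<exists>a. tq_represents r1 r2 a cc) \<longleftrightarrow>
    minset cc UNIV = minset r1 UNIV \<union> minset r2 UNIV \<and> tq_postulates r1 r2 cc"
proof
  assume "\<exists>a. tq_represents r1 r2 a cc"
  then obtain a where a: "tq_represents r1 r2 a cc" ..
  show "minset cc UNIV = minset r1 UNIV \<union> minset r2 UNIV \<and> tq_postulates r1 r2 cc"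
    using tq_represents_minset_UNIV[OF assms(1) a]
      tq_postulatesI[OF tq_represents_below_dominated[OF assms(1,2) a]] by blast
next
  assume "minset cc UNIV = minset r1 UNIV \<union> minset r2 UNIV \<and> tq_postulates r1 r2 cc"
  then show "\<exists>a. tq_represents r1 r2 a cc" using tq_postulates_imp_tq_represents[OF assms] by blast
qed

theorem theorem1:
  fixes c :: "('w::finite \<Rightarrow> 'w \<Rightarrow> bool) \<Rightarrow> ('w \<Rightarrow> 'w \<Rightarrow> bool) \<Rightarrow> ('w \<Rightarrow> 'w \<Rightarrow> bool)"
  assumes "is_combinator c"
  shows "teamqueue c \<longleftrightarrow>
    basic c \<and>
    (\<forall>r1 r2. tpo r1 \<longrightarrow> tpo r2 \<longrightarrow> (\<forall>x y z.
       (strict r1 x y \<and> strict r2 z y \<longrightarrow> strict (c r1 r2) x y \<or> strict (c r1 r2) z y) \<and>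
       (r1 x y \<and> r2 z y \<longrightarrow> c r1 r2 x y \<or> c r1 r2 z y) \<and>
       (strict r1 x y \<and> r2 z y \<longrightarrow> strict (c r1 r2) x y \<or> c r1 r2 z y) \<and>
       (strict r2 x y \<and> r1 z y \<longrightarrow> strict (c r1 r2) x y \<or> c r1 r2 z y)))"
proof -
  have "tpo (c r1 r2)" if "tpo r1" "tpo r2" for r1 r2
    using assms that by (simp add: is_combinator_def)
  then have characterization: "teamqueue c \<longleftrightarrow> (\<forall>r1 r2. tpo r1 \<longrightarrow> tpo r2 \<longrightarrow>
      minset (c r1 r2) UNIV = minset r1 UNIV \<union> minset r2 UNIV \<and> tq_postulates r1 r2 (c r1 r2))"
    unfolding teamqueue_iff_tq_represents by (simp add: tq_represents_iff_tq_postulates)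
  show ?thesis
    unfolding tq_postulates_def[symmetric] basic_def characterization by blast
qed

end
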